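(* Let $p=p(n)\in[0,1]$ and let $j=j(n)$, $k=k(n)$ be positive integer-valued functions of $n$. If $$\binom{n}{j}\binom{n}{k}\,p^{jk}\to 0\quad(n\to\infty),$$ then almost always $\|\mathcal{N}[G(n,p)]\|$ strong deformation retracts onto a subspace that is the geometric realization of a simplicial complex of dimension at most $j+k-3$.
   Context: For a graph $G$, the neighborhood complex $\mathcal{N}[G]$ is the simplicial complex on vertex set $V(G)$ whose faces are all subsets of $V(G)$ having a common neighbor. $\|\Delta\|$ denotes the geometric realization of a simplicial complex $\Delta$. $G(n,p)$ is the Erdős–Rényi random graph on vertex set $[n]$ with each possible edge present independently with probability $p$. A property holds almost always (a.a.) if its probability tends to $1$ as $n\to\infty$. *)

theory Defs
  imports "HOL-Analysis.Analysis"
begin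

definition pairs :: "nat \<Rightarrow> nat set set" where
  "pairs n = {e. \<exists>u v. u < n \<and> v < n \<and> u \<noteq> v \<and> e = {u, v}}"

text \<open>Probability that G(n,p) (edge set E \<subseteq> pairs n, each edge independently
  with probability p) has property P.\<close>
definition Gnp_prob :: "nat \<Rightarrow> real \<Rightarrow> (nat set set \<Rightarrow> bool) \<Rightarrow> real" where
  "Gnp_prob n p P = (\<Sum>E\<in>Pow (pairs n).
      if P E then p ^ card E * (1 - p) ^ (card (pairs n) - card E) else 0)"

definition almost_always :: "(nat \<Rightarrow> real) \<Rightarrow> (nat \<Rightarrow> nat set set \<Rightarrow> bool) \<Rightarrow> bool" where
  "almost_always p P \<longleftrightarrow> (\<lambda>n. Gnp_prob n (p n) (P n)) \<longlonglongrightarrow> 1"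

definition nbhd_complex :: "nat \<Rightarrow> nat set set \<Rightarrow> nat set set" where
  "nbhd_complex n E = {\<sigma>. \<sigma> \<subseteq> {0..<n} \<and> (\<exists>v<n. \<forall>u\<in>\<sigma>. {u, v} \<in> E)}"

definition simplicial_complex :: "nat set set \<Rightarrow> bool" where
  "simplicial_complex K \<longleftrightarrow> finite K \<and> (\<forall>\<sigma>\<in>K. finite \<sigma>) \<and> (\<forall>\<sigma>\<in>K. \<forall>\<tau>. \<tau> \<subseteq> \<sigma> \<longrightarrow> \<tau> \<in> K)"

definition realization_set :: "nat set set \<Rightarrow> (nat \<Rightarrow> real) set" where
  "realization_set K = {f. (\<forall>i. 0 \<le> f i) \<and> {i. f i \<noteq> 0} \<in> K \<and> sum f {i. f i \<noteq> 0} = 1}"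

definition realization :: "nat set set \<Rightarrow> (nat \<Rightarrow> real) topology" where
  "realization K = subtopology (powertop_real UNIV) (realization_set K)"

definition strong_deformation_retract :: "'a topology \<Rightarrow> 'a set \<Rightarrow> bool" where
  "strong_deformation_retract X A \<longleftrightarrow> A \<subseteq> topspace X \<and>
     (\<exists>r. continuous_map X X r \<and> r ` topspace X \<subseteq> A \<and> (\<forall>a\<in>A. r a = a) \<and>
          homotopic_with (\<lambda>h. \<forall>a\<in>A. h a = a) X X id r)"

end

(*
  Write N(S) for the common neighbourhood of a vertex set S and cl S = N(N(S)). Call a point f
  of the realization of N[G] closure-monotone if every u in cl S has f u >= f w for some w in S.
  Replacing f by its least closure-monotone majorant and renormalising is a retraction onto the
  closure-monotone points, and the straight-line homotopy to it stays inside the realization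
  because the majorant is supported on cl (supp f), again a face. The barycentric map identifies
  the closure-monotone points with the realization of the order complex of the poset of closed
  faces (nonempty faces X with cl X = X). In a chain of m closed faces the j-th smallest face Y
  has at least j vertices and, since N is injective and antitone on closed faces, a common
  neighbourhood of at least m + 1 - j vertices; so a chain of length j + k - 1 gives a copy of
  K_{j,k}. By the union bound, G(n,p) contains K_{j,k} with probability at most
  C(n,j) C(n,k) p^(jk).
*)
theory Submission
  imports Defs "HOL-Library.Nat_Bijection"
begin

section \<open>Chains of sets and compactness of realizations\<close>

lemma chain_subset_Union_mem:
  assumes "finite C" "C \<noteq> {}" "chain\<^sub>\<subseteq> C"
  shows "\<Union>C \<in> C"
  using assms
proof (induction C rule: finite_ne_induct)
  case (insert X C)
  then have "\<Union>C \<in> C" by (simp add: chain_subset_def)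
  with insert.prems have "X \<subseteq> \<Union>C \<or> \<Union>C \<subseteq> X" by (simp add: chain_subset_def)
  then show ?case using \<open>\<Union>C \<in> C\<close> by (auto simp: sup.absorb1 sup.absorb2)
qed simp

lemma card_chain_le:
  assumes X: "finite X" and C: "chain\<^sub>\<subseteq> C" and sub: "\<And>Y. Y \<in> C \<Longrightarrow> Y \<noteq> {} \<and> Y \<subseteq> X"
  shows "card C \<le> card X"
proof -
  have fin: "finite Y" if "Y \<in> C" for Y using sub[OF that] X finite_subset by blast
  have "inj_on card C"
  proof (rule inj_onI)
    fix Y Z assume "Y \<in> C" "Z \<in> C" "card Y = card Z"
    then show "Y = Z" using C fin[of Y] fin[of Z] card_subset_eq[of Y Z] card_subset_eq[of Z Y]
      unfolding chain_subset_def by auto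
  qed
  moreover have "card ` C \<subseteq> {1..card X}"
  proof
    fix m assume "m \<in> card ` C"
    then obtain Y where "Y \<in> C" "m = card Y" by blast
    then show "m \<in> {1..card X}"
      using sub[of Y] fin[of Y] card_mono[OF X, of Y] by (auto simp: Suc_le_eq card_gt_0_iff)
  qed
  ultimately have "card C \<le> card {1..card X}"
    using card_image card_mono[of "{1..card X}" "card ` C"] by fastforce
  then show ?thesis by simp
qed

lemma chain_has_element_of_rank:
  assumes C: "finite C" "chain\<^sub>\<subseteq> C" and j: "1 \<le> j" "j \<le> card C"
  shows "\<exists>Y\<in>C. card {Z \<in> C. Z \<subseteq> Y} = j"
proof -
  let ?rank = "\<lambda>Y. card {Z \<in> C. Z \<subseteq> Y}"
  have "inj_on ?rank C"
  proof (rule inj_onI)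
    fix Y Y' assume Y: "Y \<in> C" "Y' \<in> C" "?rank Y = ?rank Y'"
    have "Y = Y'" if "Y \<in> C" "Y' \<in> C" "Y \<subseteq> Y'" "?rank Y = ?rank Y'" for Y Y'
    proof -
      have "{Z \<in> C. Z \<subseteq> Y} = {Z \<in> C. Z \<subseteq> Y'}"
        using that C(1) by (intro card_subset_eq) auto
      then show ?thesis using that by blast
    qed
    then show "Y = Y'" using Y C(2) unfolding chain_subset_def by (metis (no_types, lifting))
  qed
  moreover have "?rank ` C \<subseteq> {1..card C}"
    using C(1) by (auto simp: Suc_le_eq card_gt_0_iff intro: card_mono)
  ultimately have "?rank ` C = {1..card C}"
    by (intro card_subset_eq) (simp_all add: card_image)
  then have "j \<in> ?rank ` C" using j by simp
  then show ?thesis by blast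
qed

lemma chain_card_below_add_above:
  assumes "finite C" "chain\<^sub>\<subseteq> C" "Y \<in> C"
  shows "card {Z \<in> C. Z \<subseteq> Y} + card {Z \<in> C. Y \<subseteq> Z} = card C + 1"
proof -
  have "{Z \<in> C. Z \<subseteq> Y} \<union> {Z \<in> C. Y \<subseteq> Z} = C"
    using assms(2,3) unfolding chain_subset_def by blast
  moreover have "{Z \<in> C. Z \<subseteq> Y} \<inter> {Z \<in> C. Y \<subseteq> Z} = {Y}" using assms(3) by blast
  ultimately show ?thesis using card_Un_Int[of "{Z \<in> C. Z \<subseteq> Y}" "{Z \<in> C. Y \<subseteq> Z}"] assms(1) by simp
qed

lemma set_decode_eq_iff: "set_decode a = set_decode b \<longleftrightarrow> a = b"
  by (metis set_decode_inverse)

lemma continuous_map_Min: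
  assumes "finite S" "S \<noteq> {}" "\<And>i. i \<in> S \<Longrightarrow> continuous_map X euclideanreal (h i)"
  shows "continuous_map X euclideanreal (\<lambda>x. Min ((\<lambda>i. h i x) ` S))"
  using assms
  by (induction S rule: finite_ne_induct) (simp_all add: continuous_map_real_min)

lemma continuous_map_Max:
  assumes "finite S" "S \<noteq> {}" "\<And>i. i \<in> S \<Longrightarrow> continuous_map X euclideanreal (h i)"
  shows "continuous_map X euclideanreal (\<lambda>x. Max ((\<lambda>i. h i x) ` S))"
  using assms
  by (induction S rule: finite_ne_induct) (simp_all add: continuous_map_real_max)

definition simplex_points :: "nat set \<Rightarrow> (nat \<Rightarrow> real) set" where
  "simplex_points \<sigma> = (\<Pi>\<^sub>E i\<in>UNIV. if i \<in> \<sigma> then {0..1} else {0}) \<inter> {f. sum f \<sigma> = 1}"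

lemma compactin_simplex_points:
  assumes "finite \<sigma>"
  shows "compactin (powertop_real UNIV) (simplex_points \<sigma>)"
  unfolding simplex_points_def
proof (rule compact_Int_closedin)
  show "compactin (powertop_real UNIV) (\<Pi>\<^sub>E i\<in>UNIV. if i \<in> \<sigma> then {0..1::real} else {0})"
    by (subst compactin_PiE) auto
  have "continuous_map (powertop_real UNIV) euclideanreal (\<lambda>f. sum f \<sigma>)"
    using assms by (intro continuous_map_sum continuous_map_product_projection) auto
  from closedin_continuous_map_preimage[OF this, of "{1}"]
  show "closedin (powertop_real UNIV) {f. sum f \<sigma> = 1}" by simp
qed

lemma realization_set_eq_Union_simplex_points:
  assumes K: "simplicial_complex K"
  shows "realization_set K = (\<Union>\<sigma>\<in>K. simplex_points \<sigma>)"
proof (intro set_eqI iffI)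
  fix f assume f: "f \<in> realization_set K"
  let ?\<sigma> = "{i. f i \<noteq> 0}"
  have nonneg: "\<And>i. 0 \<le> f i" and \<sigma>: "?\<sigma> \<in> K" and sum1: "sum f ?\<sigma> = 1"
    using f by (auto simp: realization_set_def)
  have "finite ?\<sigma>" using \<sigma> K by (auto simp: simplicial_complex_def)
  then have "f i \<le> 1" for i
    using member_le_sum[of i ?\<sigma> f] nonneg sum1 by (cases "f i = 0") auto
  then have "f \<in> simplex_points ?\<sigma>" using nonneg sum1 by (auto simp: simplex_points_def)
  with \<sigma> show "f \<in> (\<Union>\<sigma>\<in>K. simplex_points \<sigma>)" by blast
next
  fix f assume "f \<in> (\<Union>\<sigma>\<in>K. simplex_points \<sigma>)"
  then obtain \<sigma> where \<sigma>: "\<sigma> \<in> K" "\<And>i. f i \<in> (if i \<in> \<sigma> then {0..1} else {0})" "sum f \<sigma> = 1"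
    by (auto simp: simplex_points_def PiE_iff)
  have sub: "{i. f i \<noteq> 0} \<subseteq> \<sigma>"
  proof
    fix i assume "i \<in> {i. f i \<noteq> 0}"
    then show "i \<in> \<sigma>" using \<sigma>(2)[of i] by (auto split: if_split_asm)
  qed
  have "\<forall>i. 0 \<le> f i" using \<sigma>(2) by (metis atLeastAtMost_iff order_refl singletonD)
  moreover have "{i. f i \<noteq> 0} \<in> K" using K \<sigma>(1) sub by (auto simp: simplicial_complex_def)
  moreover have "sum f {i. f i \<noteq> 0} = 1"
    using \<sigma>(1,3) sub K by (subst sum.mono_neutral_left[of \<sigma>]) (auto simp: simplicial_complex_def)
  ultimately show "f \<in> realization_set K" by (simp add: realization_set_def)
qed

lemma compact_space_realization:
  assumes K: "simplicial_complex K"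
  shows "compact_space (realization K)"
  unfolding realization_def
proof (intro compact_space_subtopology)
  show "compactin (powertop_real UNIV) (realization_set K)"
    using K by (auto simp: realization_set_eq_Union_simplex_points simplicial_complex_def
        intro!: compactin_Union compactin_simplex_points)
qed

section \<open>Common neighbourhoods and the neighbourhood complex\<close>

definition contains_biclique :: "nat \<Rightarrow> nat \<Rightarrow> nat \<Rightarrow> nat set set \<Rightarrow> bool" where
  "contains_biclique n j k E \<longleftrightarrow> (\<exists>S T. S \<subseteq> {..<n} \<and> T \<subseteq> {..<n} \<and> card S = j \<and> card T = k \<and>
     S \<inter> T = {} \<and> (\<forall>s\<in>S. \<forall>t\<in>T. {s, t} \<in> E))"

definition supp :: "(nat \<Rightarrow> real) \<Rightarrow> nat set" where
  "supp f = {i. f i \<noteq> 0}"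

locale simple_graph =
  fixes n :: nat and E :: "nat set set"
  assumes edges_subset_pairs: "E \<subseteq> pairs n"
begin

definition common_nbhd :: "nat set \<Rightarrow> nat set" where
  "common_nbhd S = {v. v < n \<and> (\<forall>w\<in>S. {w, v} \<in> E)}"

definition nbhd_closure :: "nat set \<Rightarrow> nat set" where
  "nbhd_closure S = common_nbhd (common_nbhd S)"

lemma common_nbhd_subset: "common_nbhd S \<subseteq> {..<n}"
  by (auto simp: common_nbhd_def)

lemma finite_common_nbhd: "finite (common_nbhd S)"
  using common_nbhd_subset finite_subset by blast

lemma common_nbhd_antimono: "S \<subseteq> T \<Longrightarrow> common_nbhd T \<subseteq> common_nbhd S"
  by (auto simp: common_nbhd_def)

lemma nbhd_closure_subset: "nbhd_closure S \<subseteq> {..<n}"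
  by (simp add: nbhd_closure_def common_nbhd_subset)

lemma nbhd_closure_mono: "S \<subseteq> T \<Longrightarrow> nbhd_closure S \<subseteq> nbhd_closure T"
  by (simp add: nbhd_closure_def common_nbhd_antimono)

lemma subset_nbhd_closure: "S \<subseteq> {..<n} \<Longrightarrow> S \<subseteq> nbhd_closure S"
  by (auto simp: nbhd_closure_def common_nbhd_def insert_commute)

lemma common_nbhd_nbhd_closure:
  assumes "S \<subseteq> {..<n}"
  shows "common_nbhd (nbhd_closure S) = common_nbhd S"
proof
  show "common_nbhd (nbhd_closure S) \<subseteq> common_nbhd S"
    using common_nbhd_antimono[OF subset_nbhd_closure[OF assms]] .
  show "common_nbhd S \<subseteq> common_nbhd (nbhd_closure S)"
    using subset_nbhd_closure[OF common_nbhd_subset[of S]] by (simp add: nbhd_closure_def)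
qed

lemma nbhd_closure_idem: "S \<subseteq> {..<n} \<Longrightarrow> nbhd_closure (nbhd_closure S) = nbhd_closure S"
  by (simp add: nbhd_closure_def common_nbhd_nbhd_closure[unfolded nbhd_closure_def])

lemma common_nbhd_disjoint: "S \<inter> common_nbhd S = {}"
proof -
  have "{u} \<notin> E" for u
    using edges_subset_pairs by (auto simp: pairs_def doubleton_eq_iff)
  then show ?thesis by (auto simp: common_nbhd_def)
qed

lemma contains_biclique_common_nbhd:
  assumes "Y \<subseteq> {..<n}" "j \<le> card Y" "k \<le> card (common_nbhd Y)"
  shows "contains_biclique n j k E"
proof -
  obtain S where S: "S \<subseteq> Y" "card S = j" using obtain_subset_with_card_n[OF assms(2)] by metis
  obtain T where T: "T \<subseteq> common_nbhd Y" "card T = k" using obtain_subset_with_card_n[OF assms(3)]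
    by metis
  show ?thesis
    unfolding contains_biclique_def
  proof (intro exI conjI)
    show "S \<subseteq> {..<n}" using S(1) assms(1) by blast
    show "T \<subseteq> {..<n}" using T(1) common_nbhd_subset by blast
    show "S \<inter> T = {}" using S T common_nbhd_disjoint[of Y] by auto
    show "\<forall>s\<in>S. \<forall>t\<in>T. {s, t} \<in> E" using S T by (auto simp: common_nbhd_def)
  qed (use S T in auto)
qed

lemma nbhd_complex_iff: "\<sigma> \<in> nbhd_complex n E \<longleftrightarrow> \<sigma> \<subseteq> {..<n} \<and> common_nbhd \<sigma> \<noteq> {}"
  by (auto simp: nbhd_complex_def common_nbhd_def)

lemma nbhd_complex_downward_closed:
  "\<sigma> \<in> nbhd_complex n E \<Longrightarrow> \<tau> \<subseteq> \<sigma> \<Longrightarrow> \<tau> \<in> nbhd_complex n E"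
  by (auto simp: nbhd_complex_def)

lemma nbhd_closure_in_nbhd_complex:
  "\<sigma> \<in> nbhd_complex n E \<Longrightarrow> nbhd_closure \<sigma> \<in> nbhd_complex n E"
  using nbhd_complex_iff common_nbhd_nbhd_closure nbhd_closure_subset by auto

abbreviation nbhd_points :: "(nat \<Rightarrow> real) set" where
  "nbhd_points \<equiv> realization_set (nbhd_complex n E)"

abbreviation nbhd_space :: "(nat \<Rightarrow> real) topology" where
  "nbhd_space \<equiv> realization (nbhd_complex n E)"

lemma nbhd_points_iff:
  "f \<in> nbhd_points \<longleftrightarrow> (\<forall>i. 0 \<le> f i) \<and> supp f \<in> nbhd_complex n E \<and> sum f {..<n} = 1"
proof -
  have "sum f {i. f i \<noteq> 0} = sum f {..<n}" if "supp f \<in> nbhd_complex n E"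
    using that by (intro sum.mono_neutral_left) (auto simp: nbhd_complex_iff supp_def)
  then show ?thesis unfolding realization_set_def supp_def by auto
qed

lemma nbhd_points_vanish: "f \<in> nbhd_points \<Longrightarrow> n \<le> i \<Longrightarrow> f i = 0"
  unfolding nbhd_points_iff nbhd_complex_iff supp_def by auto

lemma topspace_nbhd_space: "topspace nbhd_space = nbhd_points"
  by (simp add: realization_def)

lemma continuous_map_nbhd_space_coordinate: "continuous_map nbhd_space euclideanreal (\<lambda>f. f i)"
  unfolding realization_def
  by (intro continuous_map_from_subtopology continuous_map_product_projection) auto

lemma continuous_map_into_nbhd_space:
  assumes "\<And>i. continuous_map X euclideanreal (\<lambda>x. g x i)" and "g ` topspace X \<subseteq> nbhd_points"
  shows "continuous_map X nbhd_space g"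
  unfolding realization_def
  using assms
  by (intro continuous_map_into_subtopology) (auto simp: continuous_map_componentwise_UNIV)

section \<open>Retraction onto the closure-monotone points\<close>

definition closure_monotone :: "(nat \<Rightarrow> real) \<Rightarrow> bool" where
  "closure_monotone f \<longleftrightarrow>
     (\<forall>S u. S \<subseteq> {..<n} \<longrightarrow> S \<noteq> {} \<longrightarrow> u \<in> nbhd_closure S \<longrightarrow> (\<exists>w\<in>S. f w \<le> f u))"

definition monotone_points :: "(nat \<Rightarrow> real) set" where
  "monotone_points = {f \<in> nbhd_points. closure_monotone f}"

definition generators :: "nat \<Rightarrow> nat set set" where
  "generators u = {S. S \<subseteq> {..<n} \<and> S \<noteq> {} \<and> u \<in> nbhd_closure S}"

text \<open>For \<open>f \<ge> 0\<close> this is the least closure-monotone majorant of \<open>f\<close> on \<open>{..<n}\<close>;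
  the \<open>0\<close> takes care of the vertices \<open>u \<ge> n\<close>, which have no generators.\<close>
definition monotone_hull :: "(nat \<Rightarrow> real) \<Rightarrow> nat \<Rightarrow> real" where
  "monotone_hull f u = Max (insert 0 ((\<lambda>S. Min (f ` S)) ` generators u))"

definition hull_retraction :: "(nat \<Rightarrow> real) \<Rightarrow> nat \<Rightarrow> real" where
  "hull_retraction f = (\<lambda>u. monotone_hull f u / sum (monotone_hull f) {..<n})"

lemma finite_generators: "finite (generators u)"
  by (rule finite_subset[of _ "Pow {..<n}"]) (auto simp: generators_def)

lemma generatorsD:
  "S \<in> generators u \<Longrightarrow> finite S \<and> S \<noteq> {} \<and> S \<subseteq> {..<n} \<and> u \<in> nbhd_closure S"
  by (auto simp: generators_def intro: finite_subset)

lemma monotone_hull_nonneg: "0 \<le> monotone_hull f u"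
  unfolding monotone_hull_def using finite_generators by (intro Max_ge) auto

lemma Min_le_monotone_hull: "S \<in> generators u \<Longrightarrow> Min (f ` S) \<le> monotone_hull f u"
  unfolding monotone_hull_def using finite_generators by (intro Max_ge) auto

lemma le_monotone_hull: "u < n \<Longrightarrow> f u \<le> monotone_hull f u"
  using Min_le_monotone_hull[of "{u}" u f] subset_nbhd_closure[of "{u}"]
  by (simp add: generators_def)

lemma monotone_hull_vanishes: "n \<le> u \<Longrightarrow> monotone_hull f u = 0"
proof -
  assume "n \<le> u"
  then have "generators u = {}" using nbhd_closure_subset by (force simp: generators_def)
  then show ?thesis by (simp add: monotone_hull_def)
qed

lemma monotone_hull_le:
  "0 \<le> c \<Longrightarrow> (\<And>S. S \<in> generators u \<Longrightarrow> Min (f ` S) \<le> c) \<Longrightarrow> monotone_hull f u \<le> c"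
  unfolding monotone_hull_def using finite_generators by (subst Max_le_iff) auto

lemma monotone_hull_attained:
  assumes "0 < monotone_hull f u"
  obtains S where "S \<in> generators u" "monotone_hull f u = Min (f ` S)"
proof -
  have "monotone_hull f u \<in> insert 0 ((\<lambda>S. Min (f ` S)) ` generators u)"
    unfolding monotone_hull_def using finite_generators by (intro Max_in) auto
  with assms that show ?thesis by auto
qed

lemma monotone_hull_eq_self:
  assumes nonneg: "\<And>i. 0 \<le> f i" and vanish: "\<And>i. n \<le> i \<Longrightarrow> f i = 0"
    and mono: "closure_monotone f"
  shows "monotone_hull f = f"
proof
  fix u
  show "monotone_hull f u = f u"
  proof (cases "u < n")
    case True
    have "monotone_hull f u \<le> f u"
    proof (rule monotone_hull_le[OF nonneg])
      fix S assume S: "S \<in> generators u"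
      then obtain w where "w \<in> S" "f w \<le> f u"
        using mono generatorsD unfolding closure_monotone_def by meson
      moreover have "Min (f ` S) \<le> f w" using S generatorsD \<open>w \<in> S\<close> by (intro Min_le) auto
      ultimately show "Min (f ` S) \<le> f u" by linarith
    qed
    then show ?thesis using le_monotone_hull[OF True, of f] by linarith
  qed (simp add: monotone_hull_vanishes vanish)
qed

lemma supp_monotone_hull:
  assumes nonneg: "\<And>i. 0 \<le> f i" and "supp f \<subseteq> {..<n}"
  shows "supp (monotone_hull f) \<subseteq> nbhd_closure (supp f)"
proof
  fix u assume "u \<in> supp (monotone_hull f)"
  then have pos: "0 < monotone_hull f u" using monotone_hull_nonneg[of f u] by (auto simp: supp_def)
  then obtain S where S: "S \<in> generators u" "monotone_hull f u = Min (f ` S)"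
    by (rule monotone_hull_attained)
  have "S \<subseteq> supp f"
  proof
    fix w assume "w \<in> S"
    then have "Min (f ` S) \<le> f w" using generatorsD[OF S(1)] by (intro Min_le) auto
    then show "w \<in> supp f" using S pos by (auto simp: supp_def)
  qed
  then show "u \<in> nbhd_closure (supp f)" using nbhd_closure_mono generatorsD[OF S(1)] by blast
qed

text \<open>If every \<open>w \<in> S\<close> beat \<open>u\<close>, the union of generators realising the hull values on \<open>S\<close>
  would be a generator of \<open>u\<close> whose minimum exceeds the hull value at \<open>u\<close>.\<close>
lemma closure_monotone_monotone_hull: "closure_monotone (monotone_hull f)"
  unfolding closure_monotone_def
proof (intro allI impI)
  fix S u assume S: "S \<subseteq> {..<n}" "S \<noteq> {}" "u \<in> nbhd_closure S"
  show "\<exists>w\<in>S. monotone_hull f w \<le> monotone_hull f u"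
  proof (rule ccontr)
    assume "\<not> ?thesis"
    then have gt: "\<And>w. w \<in> S \<Longrightarrow> monotone_hull f u < monotone_hull f w" by auto
    have "\<exists>T. T \<in> generators w \<and> monotone_hull f w = Min (f ` T)" if "w \<in> S" for w
    proof -
      have "0 < monotone_hull f w" using gt[OF that] monotone_hull_nonneg[of f u] by linarith
      then show ?thesis by (metis monotone_hull_attained)
    qed
    then obtain T where T: "\<And>w. w \<in> S \<Longrightarrow> T w \<in> generators w \<and> monotone_hull f w = Min (f ` T w)"
      by metis
    have Tw: "finite (T w) \<and> T w \<noteq> {} \<and> T w \<subseteq> {..<n} \<and> w \<in> nbhd_closure (T w)" if "w \<in> S" for w
      using T[OF that] generatorsD by blast
    define U where "U = (\<Union>w\<in>S. T w)"
    have "finite S" using S(1) finite_subset by blast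
    then have U: "U \<subseteq> {..<n}" "U \<noteq> {}" "finite U"
      using Tw S(2) unfolding U_def by auto
    have "S \<subseteq> nbhd_closure U"
    proof
      fix w assume w: "w \<in> S"
      then have "nbhd_closure (T w) \<subseteq> nbhd_closure U"
        by (intro nbhd_closure_mono) (auto simp: U_def)
      then show "w \<in> nbhd_closure U" using Tw[OF w] by blast
    qed
    then have "nbhd_closure S \<subseteq> nbhd_closure U"
      using nbhd_closure_mono nbhd_closure_idem[OF U(1)] by metis
    then have "U \<in> generators u" using U S by (auto simp: generators_def)
    then have le: "Min (f ` U) \<le> monotone_hull f u" by (rule Min_le_monotone_hull)
    have "Min (f ` U) \<in> f ` U" using U by (intro Min_in) auto
    then obtain t where t: "t \<in> U" "f t = Min (f ` U)" by auto
    then obtain w where w: "w \<in> S" "t \<in> T w" by (auto simp: U_def)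
    have "Min (f ` T w) \<le> f t" using Tw[OF w(1)] w(2) by (intro Min_le) auto
    then show False using T[OF w(1)] gt[OF w(1)] t le by linarith
  qed
qed

lemma closure_monotone_divide: "closure_monotone f \<Longrightarrow> 0 < c \<Longrightarrow> closure_monotone (\<lambda>u. f u / c)"
  unfolding closure_monotone_def by (meson divide_right_mono less_imp_le)

lemma sum_monotone_hull_ge_1: "f \<in> nbhd_points \<Longrightarrow> 1 \<le> sum (monotone_hull f) {..<n}"
proof -
  assume f: "f \<in> nbhd_points"
  have "sum f {..<n} \<le> sum (monotone_hull f) {..<n}" by (intro sum_mono le_monotone_hull) auto
  then show ?thesis using f by (simp add: nbhd_points_iff)
qed

lemma supp_hull_retraction:
  assumes "f \<in> nbhd_points"
  shows "supp (hull_retraction f) \<subseteq> nbhd_closure (supp f)"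
proof -
  have "\<And>i. 0 \<le> f i" "supp f \<subseteq> {..<n}" using assms by (auto simp: nbhd_points_iff nbhd_complex_iff)
  then have "supp (monotone_hull f) \<subseteq> nbhd_closure (supp f)" by (rule supp_monotone_hull)
  then show ?thesis by (auto simp: supp_def hull_retraction_def)
qed

lemma hull_retraction_in_monotone_points:
  assumes f: "f \<in> nbhd_points"
  shows "hull_retraction f \<in> monotone_points"
proof -
  define s where "s = sum (monotone_hull f) {..<n}"
  have s: "1 \<le> s" using sum_monotone_hull_ge_1[OF f] by (simp add: s_def)
  have "supp f \<in> nbhd_complex n E" using f by (simp add: nbhd_points_iff)
  then have "supp (hull_retraction f) \<in> nbhd_complex n E"
    using supp_hull_retraction[OF f] nbhd_closure_in_nbhd_complex nbhd_complex_downward_closed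
    by blast
  moreover have "\<forall>i. 0 \<le> hull_retraction f i"
    using s monotone_hull_nonneg by (auto simp: hull_retraction_def s_def)
  moreover have "sum (hull_retraction f) {..<n} = 1"
    using s by (simp add: hull_retraction_def sum_divide_distrib[symmetric] s_def)
  moreover have "closure_monotone (hull_retraction f)"
    using closure_monotone_divide[OF closure_monotone_monotone_hull, of s f] s
    by (simp add: hull_retraction_def s_def)
  ultimately show ?thesis by (simp add: monotone_points_def nbhd_points_iff)
qed

lemma hull_retraction_fixes:
  assumes "f \<in> monotone_points"
  shows "hull_retraction f = f"
proof -
  have f: "f \<in> nbhd_points" "closure_monotone f" using assms by (auto simp: monotone_points_def)
  then have "monotone_hull f = f"
    using nbhd_points_vanish[OF f(1)] by (intro monotone_hull_eq_self) (auto simp: nbhd_points_iff)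
  with f show ?thesis by (simp add: hull_retraction_def nbhd_points_iff)
qed

lemma continuous_map_monotone_hull:
  "continuous_map nbhd_space euclideanreal (\<lambda>f. monotone_hull f u)"
proof (cases "generators u = {}")
  case False
  have "continuous_map nbhd_space euclideanreal (\<lambda>f. Min (f ` S))" if "S \<in> generators u" for S
    using continuous_map_Min[of S nbhd_space "\<lambda>i f. f i"] generatorsD[OF that]
      continuous_map_nbhd_space_coordinate by auto
  then have "continuous_map nbhd_space euclideanreal
               (\<lambda>f. max 0 (Max ((\<lambda>S. Min (f ` S)) ` generators u)))"
    using False finite_generators by (intro continuous_map_real_max continuous_map_Max) auto
  then show ?thesis using False finite_generators by (simp add: monotone_hull_def)
qed (simp add: monotone_hull_def)

lemma continuous_map_hull_retraction: "continuous_map nbhd_space nbhd_space hull_retraction"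
proof (rule continuous_map_into_nbhd_space)
  fix u
  show "continuous_map nbhd_space euclideanreal (\<lambda>f. hull_retraction f u)"
    unfolding hull_retraction_def
    using sum_monotone_hull_ge_1 topspace_nbhd_space
    by (intro continuous_map_real_divide continuous_map_sum continuous_map_monotone_hull) force+
  show "hull_retraction ` topspace nbhd_space \<subseteq> nbhd_points"
    using hull_retraction_in_monotone_points by (auto simp: topspace_nbhd_space monotone_points_def)
qed

lemma segment_to_hull_retraction_in_nbhd_points:
  assumes t: "0 \<le> t" "t \<le> 1" and f: "f \<in> nbhd_points"
  shows "(\<lambda>u. (1 - t) * f u + t * hull_retraction f u) \<in> nbhd_points" (is "?h \<in> _")
proof -
  have rf: "hull_retraction f \<in> nbhd_points"
    using hull_retraction_in_monotone_points[OF f] by (simp add: monotone_points_def)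
  have sf: "supp f \<in> nbhd_complex n E" using f by (simp add: nbhd_points_iff)
  have "supp ?h \<subseteq> supp f \<union> supp (hull_retraction f)" by (auto simp: supp_def)
  also have "\<dots> \<subseteq> nbhd_closure (supp f)"
    using supp_hull_retraction[OF f] subset_nbhd_closure sf by (auto simp: nbhd_complex_iff)
  finally have "supp ?h \<in> nbhd_complex n E"
    using nbhd_complex_downward_closed nbhd_closure_in_nbhd_complex[OF sf] by blast
  moreover have "\<forall>i. 0 \<le> ?h i" using f rf t by (simp add: nbhd_points_iff)
  moreover have "sum ?h {..<n} = (1 - t) * sum f {..<n} + t * sum (hull_retraction f) {..<n}"
    by (simp add: sum.distrib sum_distrib_left)
  ultimately show ?thesis using f rf by (simp add: nbhd_points_iff)
qed

theorem strong_deformation_retract_monotone_points: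
  "strong_deformation_retract nbhd_space monotone_points"
  unfolding strong_deformation_retract_def
proof (intro conjI exI)
  show "monotone_points \<subseteq> topspace nbhd_space"
    by (auto simp: monotone_points_def topspace_nbhd_space)
  show "continuous_map nbhd_space nbhd_space hull_retraction"
    by (rule continuous_map_hull_retraction)
  show "hull_retraction ` topspace nbhd_space \<subseteq> monotone_points"
    using hull_retraction_in_monotone_points topspace_nbhd_space by auto
  show "\<forall>f\<in>monotone_points. hull_retraction f = f"
    using hull_retraction_fixes by auto
  let ?H = "\<lambda>(t, f) u. (1 - t) * f u + t * hull_retraction f u"
  show "homotopic_with (\<lambda>h. \<forall>f\<in>monotone_points. h f = f) nbhd_space nbhd_space id hull_retraction"
    unfolding homotopic_with_def
  proof (intro exI conjI allI ballI)
    let ?P = "prod_topology (top_of_set {0..1::real}) nbhd_space"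
    have "continuous_map ?P euclideanreal fst"
      using continuous_map_compose[OF continuous_map_fst
          continuous_map_from_subtopology[OF continuous_map_id]]
      by (simp add: o_def)
    moreover have coordinate: "continuous_map ?P euclideanreal (\<lambda>z. g (snd z) u)"
      if "continuous_map nbhd_space nbhd_space g" for g u
      using continuous_map_compose[OF continuous_map_compose[OF continuous_map_snd that]
          continuous_map_nbhd_space_coordinate]
      by (simp add: o_def)
    moreover have "continuous_map ?P euclideanreal (\<lambda>z. snd z u)"
      and "continuous_map ?P euclideanreal (\<lambda>z. hull_retraction (snd z) u)" for u
      using coordinate[OF continuous_map_id] coordinate[OF continuous_map_hull_retraction]
      by simp_all
    ultimately show "continuous_map ?P nbhd_space ?H"
      using segment_to_hull_retraction_in_nbhd_points
      by (intro continuous_map_into_nbhd_space)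
        (auto simp: case_prod_unfold topspace_nbhd_space intro!: continuous_intros)
    show "?H (0, f) = id f" "?H (1, f) = hull_retraction f" for f by auto
    show "?H (t, f) = f" if "f \<in> monotone_points" for t f
      using hull_retraction_fixes[OF that] by (simp add: algebra_simps)
  qed
qed

section \<open>The order complex of closed faces\<close>

definition closed_faces :: "nat set set" where
  "closed_faces = {X \<in> nbhd_complex n E. X \<noteq> {} \<and> nbhd_closure X = X}"

text \<open>The order complex of \<open>closed_faces\<close> must have natural-number vertices, so the closed
  face \<open>X\<close> is represented by the vertex \<open>set_encode X\<close>.\<close>
definition closed_codes :: "nat set" where
  "closed_codes = set_encode ` closed_faces"

definition closed_chain :: "nat set \<Rightarrow> bool" where
  "closed_chain D \<longleftrightarrow> D \<subseteq> closed_codes \<and> chain\<^sub>\<subseteq> (set_decode ` D)"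

definition order_complex :: "nat set set" where
  "order_complex = {D. closed_chain D}"

definition barycentre :: "nat set \<Rightarrow> nat \<Rightarrow> real" where
  "barycentre X u = (if u \<in> X then 1 / real (card X) else 0)"

definition barycentric_map :: "(nat \<Rightarrow> real) \<Rightarrow> nat \<Rightarrow> real" where
  "barycentric_map w = (\<lambda>u. \<Sum>c\<in>closed_codes. w c * barycentre (set_decode c) u)"

lemma closed_facesD:
  "X \<in> closed_faces \<Longrightarrow> X \<noteq> {} \<and> X \<subseteq> {..<n} \<and> finite X \<and> nbhd_closure X = X \<and> common_nbhd X \<noteq> {}"
  by (auto simp: closed_faces_def nbhd_complex_iff intro: finite_subset)

lemma closed_codes_iff: "c \<in> closed_codes \<longleftrightarrow> set_decode c \<in> closed_faces"
  using closed_facesD by (force simp: closed_codes_def)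

lemma finite_closed_codes: "finite closed_codes"
proof -
  have "closed_faces \<subseteq> Pow {..<n}" using closed_facesD by blast
  then show ?thesis unfolding closed_codes_def
    by (meson finite_Pow_iff finite_imageI finite_lessThan finite_subset)
qed

lemma closed_chain_subset: "closed_chain D \<Longrightarrow> D' \<subseteq> D \<Longrightarrow> closed_chain D'"
  unfolding closed_chain_def chain_subset_def by blast

lemma finite_closed_chain: "closed_chain D \<Longrightarrow> finite D"
  unfolding closed_chain_def using finite_closed_codes finite_subset by blast

lemma closed_chain_top:
  assumes "closed_chain D" "D \<noteq> {}"
  obtains m where "m \<in> D" "\<And>c. c \<in> D \<Longrightarrow> set_decode c \<subseteq> set_decode m"
proof -
  have "\<Union>(set_decode ` D) \<in> set_decode ` D"
  proof (rule chain_subset_Union_mem)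
    show "finite (set_decode ` D)" using finite_closed_chain[OF assms(1)] by simp
    show "chain\<^sub>\<subseteq> (set_decode ` D)" using assms(1) by (simp add: closed_chain_def)
  qed (use assms(2) in simp)
  then obtain m where m: "m \<in> D" "set_decode m = \<Union>(set_decode ` D)" by auto
  show ?thesis
  proof (rule that[OF m(1)])
    show "set_decode c \<subseteq> set_decode m" if "c \<in> D" for c using that m(2) by auto
  qed
qed

lemma closed_chain_insert_top:
  assumes "closed_chain D" "c \<in> closed_codes" "\<And>c'. c' \<in> D \<Longrightarrow> set_decode c' \<subseteq> set_decode c"
  shows "closed_chain (insert c D)"
  using assms unfolding closed_chain_def chain_subset_def by blast

lemma simplicial_complex_order_complex: "simplicial_complex order_complex"
  unfolding simplicial_complex_def
proof (intro conjI ballI allI impI)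
  show "finite order_complex"
  proof (rule finite_subset)
    show "order_complex \<subseteq> Pow closed_codes" by (auto simp: order_complex_def closed_chain_def)
  qed (simp add: finite_closed_codes)
  show "finite D" if "D \<in> order_complex" for D
    using that finite_closed_chain unfolding order_complex_def by blast
  show "D' \<in> order_complex" if "D \<in> order_complex" "D' \<subseteq> D" for D D'
    using that closed_chain_subset unfolding order_complex_def by blast
qed

lemma order_complex_points_iff:
  "t \<in> realization_set order_complex \<longleftrightarrow>
     (\<forall>i. 0 \<le> t i) \<and> closed_chain (supp t) \<and> sum t closed_codes = 1"
proof -
  have "sum t {i. t i \<noteq> 0} = sum t closed_codes" if "closed_chain (supp t)"
    using that finite_closed_codes
    by (intro sum.mono_neutral_left) (auto simp: closed_chain_def supp_def)
  then show ?thesis unfolding realization_set_def order_complex_def supp_def by auto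
qed

lemma sum_barycentre:
  assumes "X \<in> closed_faces"
  shows "sum (barycentre X) {..<n} = 1"
proof -
  have X: "X \<noteq> {}" "X \<subseteq> {..<n}" "finite X" using closed_facesD[OF assms] by auto
  then have "sum (barycentre X) {..<n} = sum (barycentre X) X"
    by (intro sum.mono_neutral_right) (auto simp: barycentre_def)
  also have "\<dots> = 1" using X by (simp add: barycentre_def)
  finally show ?thesis .
qed

lemma sum_barycentric_map: "sum (barycentric_map w) {..<n} = sum w closed_codes"
  unfolding barycentric_map_def
  by (subst sum.swap) (simp add: sum_distrib_left[symmetric] sum_barycentre closed_codes_iff)

lemma barycentric_map_nonneg: "(\<And>c. 0 \<le> w c) \<Longrightarrow> 0 \<le> barycentric_map w u"
  unfolding barycentric_map_def barycentre_def by (intro sum_nonneg) auto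

lemma barycentric_map_add:
  "barycentric_map (\<lambda>c. w c + w' c) u = barycentric_map w u + barycentric_map w' u"
  unfolding barycentric_map_def by (simp add: distrib_right sum.distrib)

lemma barycentric_map_single:
  assumes "c \<in> closed_codes"
  shows "barycentric_map (\<lambda>c'. if c' = c then x else 0) u = x * barycentre (set_decode c) u"
proof -
  have "barycentric_map (\<lambda>c'. if c' = c then x else 0) u =
        (\<Sum>c'\<in>closed_codes. if c' = c then x * barycentre (set_decode c') u else 0)"
    unfolding barycentric_map_def by (intro sum.cong) auto
  then show ?thesis using assms finite_closed_codes by simp
qed

lemma barycentric_map_split:
  assumes "c \<in> closed_codes"
  shows "barycentric_map w u = barycentric_map (w(c := 0)) u + w c * barycentre (set_decode c) u"
proof -
  have "w = (\<lambda>c'. (w(c := 0)) c' + (if c' = c then w c else 0))" by auto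
  then have "barycentric_map w u =
      barycentric_map (w(c := 0)) u + barycentric_map (\<lambda>c'. if c' = c then w c else 0) u"
    by (metis barycentric_map_add)
  then show ?thesis using barycentric_map_single[OF assms] by simp
qed

lemma barycentric_map_eq_sum_supp:
  "supp w \<subseteq> closed_codes \<Longrightarrow> barycentric_map w u = (\<Sum>c\<in>supp w. w c * barycentre (set_decode c) u)"
  unfolding barycentric_map_def using finite_closed_codes
  by (intro sum.mono_neutral_right) (auto simp: supp_def)

lemma barycentric_map_ge:
  "(\<And>c. 0 \<le> w c) \<Longrightarrow> c \<in> closed_codes \<Longrightarrow> w c * barycentre (set_decode c) u \<le> barycentric_map w u"
  unfolding barycentric_map_def barycentre_def using finite_closed_codes
  by (intro member_le_sum) auto

lemma supp_barycentric_map: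
  assumes nonneg: "\<And>c. 0 \<le> w c" and "supp w \<subseteq> closed_codes"
  shows "supp (barycentric_map w) = (\<Union>c\<in>supp w. set_decode c)"
proof
  show "supp (barycentric_map w) \<subseteq> (\<Union>c\<in>supp w. set_decode c)"
  proof
    fix u assume "u \<in> supp (barycentric_map w)"
    then have "(\<Sum>c\<in>supp w. w c * barycentre (set_decode c) u) \<noteq> 0"
      using barycentric_map_eq_sum_supp[OF assms(2)] by (simp add: supp_def)
    then obtain c where "c \<in> supp w" "w c * barycentre (set_decode c) u \<noteq> 0"
      by (meson sum.neutral)
    then show "u \<in> (\<Union>c\<in>supp w. set_decode c)" by (auto simp: barycentre_def split: if_splits)
  qed
  show "(\<Union>c\<in>supp w. set_decode c) \<subseteq> supp (barycentric_map w)"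
  proof
    fix u assume "u \<in> (\<Union>c\<in>supp w. set_decode c)"
    then obtain c where c: "c \<in> supp w" "u \<in> set_decode c" by auto
    then have "c \<in> closed_codes" using assms(2) by blast
    then have "0 < w c * barycentre (set_decode c) u"
      using c nonneg[of c] closed_facesD
      by (auto simp: supp_def barycentre_def closed_codes_iff card_gt_0_iff)
    also have "\<dots> \<le> barycentric_map w u" using barycentric_map_ge nonneg \<open>c \<in> closed_codes\<close> .
    finally show "u \<in> supp (barycentric_map w)" by (simp add: supp_def)
  qed
qed

lemma supp_barycentric_map_top:
  assumes "\<And>c. 0 \<le> w c" "closed_chain (supp w)"
    and "m \<in> supp w" "\<And>c. c \<in> supp w \<Longrightarrow> set_decode c \<subseteq> set_decode m"
  shows "supp (barycentric_map w) = set_decode m"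
  using supp_barycentric_map[of w] assms by (auto simp: closed_chain_def)

lemma supp_barycentric_map_eq_empty:
  assumes "\<And>c. 0 \<le> w c" "closed_chain (supp w)"
  shows "supp (barycentric_map w) = {} \<longleftrightarrow> supp w = {}"
proof -
  have codes: "supp w \<subseteq> closed_codes" using assms(2) by (simp add: closed_chain_def)
  then have "set_decode c \<noteq> {}" if "c \<in> supp w" for c
    using that by (auto simp: closed_codes_iff closed_faces_def)
  then show ?thesis using supp_barycentric_map[OF assms(1) codes] by auto
qed

text \<open>If every \<open>x \<in> S\<close> lay in a face of the chain that misses \<open>u\<close>, the largest of these faces
  would be a closed face containing \<open>S\<close> but not \<open>u \<in> nbhd_closure S\<close>.\<close>
lemma closure_monotone_barycentric_map:
  assumes nonneg: "\<And>c. 0 \<le> w c" and chain: "closed_chain (supp w)"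
  shows "closure_monotone (barycentric_map w)"
  unfolding closure_monotone_def
proof (intro allI impI)
  fix S u assume S: "S \<subseteq> {..<n}" "S \<noteq> {}" "u \<in> nbhd_closure S"
  have "\<exists>x\<in>S. \<forall>c\<in>supp w. x \<in> set_decode c \<longrightarrow> u \<in> set_decode c"
  proof (rule ccontr)
    assume "\<not> ?thesis"
    then obtain cf where
      cf: "\<And>x. x \<in> S \<Longrightarrow> cf x \<in> supp w \<and> x \<in> set_decode (cf x) \<and> u \<notin> set_decode (cf x)"
      by metis
    have "closed_chain (cf ` S)" using cf by (intro closed_chain_subset[OF chain]) auto
    moreover have "cf ` S \<noteq> {}" using S(2) by simp
    ultimately obtain m where m: "m \<in> cf ` S" "\<And>c. c \<in> cf ` S \<Longrightarrow> set_decode c \<subseteq> set_decode m"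
      using closed_chain_top by blast
    have "m \<in> closed_codes" using m(1) cf chain unfolding closed_chain_def by blast
    then have "set_decode m \<in> closed_faces" by (simp add: closed_codes_iff)
    moreover have "S \<subseteq> set_decode m" using cf m by blast
    ultimately have "nbhd_closure S \<subseteq> set_decode m" using nbhd_closure_mono closed_facesD by metis
    moreover have "u \<notin> set_decode m" using m(1) cf by auto
    ultimately show False using S(3) by blast
  qed
  then obtain x where x: "x \<in> S" "\<And>c. c \<in> supp w \<Longrightarrow> x \<in> set_decode c \<Longrightarrow> u \<in> set_decode c"
    by blast
  have "barycentric_map w x \<le> barycentric_map w u"
    unfolding barycentric_map_def
  proof (rule sum_mono)
    fix c
    show "w c * barycentre (set_decode c) x \<le> w c * barycentre (set_decode c) u"
      using x(2)[of c] nonneg[of c] by (cases "w c = 0") (auto simp: supp_def barycentre_def)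
  qed
  then show "\<exists>x\<in>S. barycentric_map w x \<le> barycentric_map w u" using x(1) by blast
qed

lemma barycentric_map_in_monotone_points:
  assumes t: "t \<in> realization_set order_complex"
  shows "barycentric_map t \<in> monotone_points"
proof -
  have nonneg: "\<And>c. 0 \<le> t c" and chain: "closed_chain (supp t)" and sum1: "sum t closed_codes = 1"
    using t by (auto simp: order_complex_points_iff)
  have codes: "supp t \<subseteq> closed_codes" using chain by (simp add: closed_chain_def)
  have "supp t \<noteq> {}"
  proof
    assume "supp t = {}"
    then have "sum t closed_codes = 0" by (intro sum.neutral) (auto simp: supp_def)
    with sum1 show False by simp
  qed
  with chain obtain m where m: "m \<in> supp t" "\<And>c. c \<in> supp t \<Longrightarrow> set_decode c \<subseteq> set_decode m"
    using closed_chain_top by blast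
  have "supp (barycentric_map t) \<subseteq> set_decode m"
    using supp_barycentric_map[OF nonneg codes] m(2) by auto
  moreover have "set_decode m \<in> nbhd_complex n E"
    using m(1) codes by (auto simp: closed_codes_iff closed_faces_def)
  ultimately have "supp (barycentric_map t) \<in> nbhd_complex n E"
    using nbhd_complex_downward_closed by blast
  then show ?thesis
    using sum_barycentric_map[of t] sum1 barycentric_map_nonneg[OF nonneg]
      closure_monotone_barycentric_map[OF nonneg chain]
    by (simp add: monotone_points_def nbhd_points_iff)
qed

lemma closed_face_supp_if_closure_monotone:
  assumes nonneg: "\<And>i. 0 \<le> a i" and mono: "closure_monotone a"
    and face: "supp a \<in> nbhd_complex n E" and "supp a \<noteq> {}"
  shows "supp a \<in> closed_faces"
proof -
  have "nbhd_closure (supp a) \<subseteq> supp a"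
  proof
    fix u assume "u \<in> nbhd_closure (supp a)"
    then obtain x where "x \<in> supp a" "a x \<le> a u"
      using mono assms(4) face unfolding closure_monotone_def nbhd_complex_iff by blast
    then show "u \<in> supp a" using nonneg[of x] by (auto simp: supp_def)
  qed
  then show ?thesis
    using subset_nbhd_closure face assms(4) by (auto simp: closed_faces_def nbhd_complex_iff)
qed

lemma closure_monotone_truncate:
  assumes mono: "closure_monotone a" and closed: "nbhd_closure (supp a) = supp a"
    and above: "\<And>u. u \<in> supp a \<Longrightarrow> m \<le> a u"
  shows "closure_monotone (\<lambda>u. if u \<in> supp a then a u - m else 0)" (is "closure_monotone ?a")
  unfolding closure_monotone_def
proof (intro allI impI)
  fix S u assume S: "S \<subseteq> {..<n}" "S \<noteq> {}" "u \<in> nbhd_closure S"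
  have nonneg: "0 \<le> ?a v" for v using above[of v] by auto
  show "\<exists>w\<in>S. ?a w \<le> ?a u"
  proof (cases "S \<subseteq> supp a")
    case True
    then have "u \<in> supp a" using S(3) nbhd_closure_mono closed by blast
    moreover obtain w where "w \<in> S" "a w \<le> a u" using mono S unfolding closure_monotone_def by blast
    ultimately show ?thesis using True by auto
  next
    case False
    then obtain w where "w \<in> S" "w \<notin> supp a" by blast
    then show ?thesis using nonneg[of u] by auto
  qed
qed

lemma peel_minimum:
  assumes nonneg: "\<And>i. 0 \<le> a i" and mono: "closure_monotone a" and Y: "supp a \<in> closed_faces"
  obtains m a' where "0 < m" "supp a' \<subset> supp a" "\<And>i. 0 \<le> a' i" "closure_monotone a'"
    "\<And>u. a u = a' u + m * real (card (supp a)) * barycentre (supp a) u"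
proof -
  define Y where "Y = supp a"
  have finY: "finite Y" and closedY: "nbhd_closure Y = Y" and "Y \<noteq> {}"
    using closed_facesD[OF Y] by (simp_all add: Y_def)
  define m where "m = Min (a ` Y)"
  have "m \<in> a ` Y" using finY \<open>Y \<noteq> {}\<close> by (simp add: m_def)
  then obtain y where y: "y \<in> Y" "a y = m" by auto
  have m_le: "\<And>u. u \<in> Y \<Longrightarrow> m \<le> a u" using finY by (simp add: m_def)
  define a' where "a' = (\<lambda>u. if u \<in> Y then a u - m else 0)"
  show ?thesis
  proof (rule that)
    have "a y \<noteq> 0" using y(1) by (simp add: Y_def supp_def)
    then show "0 < m" using nonneg[of y] y(2) by linarith
    have "supp a' \<subseteq> Y" "y \<notin> supp a'" using y by (auto simp: a'_def supp_def)
    then show "supp a' \<subset> supp a" using y(1) unfolding Y_def by blast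
    show "0 \<le> a' i" for i using m_le by (simp add: a'_def)
    show "closure_monotone a'"
      using closure_monotone_truncate[OF mono, of m] closedY m_le by (simp add: a'_def Y_def)
    have "card Y \<noteq> 0" using finY \<open>Y \<noteq> {}\<close> by simp
    then show "a u = a' u + m * real (card (supp a)) * barycentre (supp a) u" for u
      by (cases "u \<in> Y") (simp_all add: a'_def barycentre_def flip: Y_def, simp add: Y_def supp_def)
  qed
qed

lemma barycentric_decomposition:
  assumes "\<And>i. 0 \<le> a i" "closure_monotone a" "supp a \<in> nbhd_complex n E"
  shows "\<exists>w. (\<forall>c. 0 \<le> w c) \<and> closed_chain (supp w) \<and> (\<forall>c\<in>supp w. set_decode c \<subseteq> supp a) \<and>
             barycentric_map w = a"
  using assms
proof (induction "card (supp a)" arbitrary: a rule: less_induct)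
  case less
  show ?case
  proof (cases "supp a = {}")
    case True
    then have "a = (\<lambda>_. 0)" by (auto simp: supp_def)
    then show ?thesis
      by (intro exI[of _ "\<lambda>_. 0"])
        (simp add: barycentric_map_def supp_def closed_chain_def chain_subset_def)
  next
    case False
    let ?Y = "supp a"
    have Y: "?Y \<in> closed_faces" using closed_face_supp_if_closure_monotone less.prems False by simp
    obtain m a' where m: "0 < m" and a': "supp a' \<subset> ?Y" "\<And>i. 0 \<le> a' i" "closure_monotone a'"
      and a: "\<And>u. a u = a' u + m * real (card ?Y) * barycentre ?Y u"
      using peel_minimum[OF less.prems(1,2) Y] by blast
    have smaller: "card (supp a') < card ?Y" using psubset_card_mono[OF _ a'(1)] Y closed_facesD
      by simp
    have "supp a' \<in> nbhd_complex n E"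
      using less.prems(3) a'(1) nbhd_complex_downward_closed by auto
    with less.hyps[OF smaller a'(2,3)]
    have "\<exists>w'. (\<forall>c. 0 \<le> w' c) \<and> closed_chain (supp w') \<and>
        (\<forall>c\<in>supp w'. set_decode c \<subseteq> supp a') \<and> barycentric_map w' = a'" .
    then obtain w' where w': "\<And>c. 0 \<le> w' c" "closed_chain (supp w')"
        "\<And>c. c \<in> supp w' \<Longrightarrow> set_decode c \<subseteq> supp a'" "barycentric_map w' = a'"
      by blast
    define cY where "cY = set_encode ?Y"
    have cY: "cY \<in> closed_codes" "set_decode cY = ?Y"
      using Y closed_facesD by (auto simp: cY_def closed_codes_def)
    then have "cY \<notin> supp w'" using w'(3) a'(1) by blast
    define w where "w = w'(cY := m * real (card ?Y))"
    have "w(cY := 0) = w'" using \<open>cY \<notin> supp w'\<close> by (auto simp: w_def supp_def)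
    have "barycentric_map w = a"
    proof
      fix u
      show "barycentric_map w u = a u"
        using barycentric_map_split[OF cY(1), of w u] \<open>w(cY := 0) = w'\<close> w'(4) a[of u]
        by (simp add: w_def cY(2))
    qed
    moreover have "supp w \<subseteq> insert cY (supp w')" by (auto simp: w_def supp_def)
    moreover have chain: "closed_chain (insert cY (supp w'))"
      using closed_chain_insert_top[OF w'(2) cY(1)] w'(3) a'(1) cY(2) by blast
    moreover have "\<forall>c. 0 \<le> w c" using w'(1) m by (simp add: w_def)
    moreover have "\<forall>c\<in>insert cY (supp w'). set_decode c \<subseteq> ?Y" using w'(3) a'(1) cY(2) by blast
    ultimately show ?thesis using closed_chain_subset[OF chain] by blast
  qed
qed

lemma barycentric_map_onto:
  assumes "a \<in> monotone_points"
  shows "\<exists>t\<in>realization_set order_complex. barycentric_map t = a"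
proof -
  have a: "\<And>i. 0 \<le> a i" "closure_monotone a" "supp a \<in> nbhd_complex n E" "sum a {..<n} = 1"
    using assms by (auto simp: monotone_points_def nbhd_points_iff)
  then obtain w where w: "\<forall>c. 0 \<le> w c" "closed_chain (supp w)" "barycentric_map w = a"
    using barycentric_decomposition by blast
  moreover have "sum w closed_codes = 1" using sum_barycentric_map[of w] w(3) a(4) by simp
  ultimately show ?thesis by (auto simp: order_complex_points_iff)
qed

text \<open>The weight of the top face of a chain is read off from the minimum of the point over
  that face, attained at a vertex outside the next smaller face.\<close>
lemma top_weight_eq:
  assumes nonneg: "\<And>c. 0 \<le> w c" and chain: "closed_chain (supp w)"
    and c: "c \<in> supp w" and top: "\<And>c'. c' \<in> supp w \<Longrightarrow> set_decode c' \<subseteq> set_decode c"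
  shows "w c = real (card (set_decode c)) * Min (barycentric_map w ` set_decode c)"
proof -
  define X where "X = set_decode c"
  have codes: "supp w \<subseteq> closed_codes" using chain by (simp add: closed_chain_def)
  then have "X \<in> closed_faces" using c by (auto simp: X_def closed_codes_iff)
  then have X: "X \<noteq> {}" "finite X" by (simp_all add: closed_facesD)
  define D where "D = supp w - {c}"
  obtain u where u: "u \<in> X" "\<And>c'. c' \<in> D \<Longrightarrow> u \<notin> set_decode c'"
  proof (cases "D = {}")
    case True
    with X that show ?thesis by blast
  next
    case False
    have "closed_chain D" using closed_chain_subset[OF chain] by (auto simp: D_def)
    with False obtain m where m: "m \<in> D" "\<And>c'. c' \<in> D \<Longrightarrow> set_decode c' \<subseteq> set_decode m"
      using closed_chain_top by blast
    have "m \<in> supp w" "m \<noteq> c" using m(1) by (auto simp: D_def)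
    then have "set_decode m \<subset> X" using top[of m] set_decode_eq_iff[of m c] by (auto simp: X_def)
    then obtain u where "u \<in> X" "u \<notin> set_decode m" by blast
    with m(2) that show ?thesis by blast
  qed
  have "barycentric_map w u = (\<Sum>c'\<in>supp w. w c' * barycentre (set_decode c') u)"
    by (rule barycentric_map_eq_sum_supp[OF codes])
  also have "\<dots> = w c * barycentre X u + (\<Sum>c'\<in>D. w c' * barycentre (set_decode c') u)"
    unfolding D_def X_def using finite_closed_chain[OF chain] c by (rule sum.remove)
  also have "(\<Sum>c'\<in>D. w c' * barycentre (set_decode c') u) = 0"
    using u(2) by (simp add: barycentre_def)
  also have "w c * barycentre X u = w c / real (card X)" using u(1) by (simp add: barycentre_def)
  finally have "barycentric_map w u = w c / real (card X)" by simp
  then have "w c / real (card X) \<in> barycentric_map w ` X" using u(1) by (metis image_eqI)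
  moreover have "w c / real (card X) \<le> barycentric_map w v" if "v \<in> X" for v
    using barycentric_map_ge[of w c v, OF nonneg] codes c that
    by (simp add: subset_iff barycentre_def X_def)
  ultimately have "Min (barycentric_map w ` X) = w c / real (card X)"
    using X by (intro Min_eqI) auto
  then show ?thesis using X by (simp add: X_def)
qed

lemma barycentric_map_eq_top_weight:
  assumes nonneg: "\<And>c. 0 \<le> w1 c" "\<And>c. 0 \<le> w2 c"
    and chain: "closed_chain (supp w1)" "closed_chain (supp w2)"
    and eq: "barycentric_map w1 = barycentric_map w2" and "supp w1 \<noteq> {}"
  obtains c where "c \<in> supp w1" "c \<in> closed_codes" "w1 c = w2 c"
proof -
  have "supp (barycentric_map w2) \<noteq> {}"
    using assms(6) eq supp_barycentric_map_eq_empty[OF nonneg(1) chain(1)] by simp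
  then have "supp w2 \<noteq> {}" using supp_barycentric_map_eq_empty[OF nonneg(2) chain(2)] by simp
  obtain c1 where c1: "c1 \<in> supp w1" "\<And>c. c \<in> supp w1 \<Longrightarrow> set_decode c \<subseteq> set_decode c1"
    using chain(1) assms(6) closed_chain_top by blast
  obtain c where c: "c \<in> supp w2" "\<And>c'. c' \<in> supp w2 \<Longrightarrow> set_decode c' \<subseteq> set_decode c"
    using chain(2) \<open>supp w2 \<noteq> {}\<close> closed_chain_top by blast
  have "set_decode c1 = set_decode c"
    using supp_barycentric_map_top[OF nonneg(1) chain(1) c1]
      supp_barycentric_map_top[OF nonneg(2) chain(2) c]
      eq by simp
  then have "c1 = c" by (simp add: set_decode_eq_iff)
  with c1 have c1: "c \<in> supp w1" "\<And>c'. c' \<in> supp w1 \<Longrightarrow> set_decode c' \<subseteq> set_decode c" by auto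
  show ?thesis
  proof (rule that[OF c1(1)])
    show "c \<in> closed_codes" using c chain(2) by (auto simp: closed_chain_def)
    show "w1 c = w2 c"
      using top_weight_eq[OF nonneg(1) chain(1) c1] top_weight_eq[OF nonneg(2) chain(2) c] eq
      by simp
  qed
qed

lemma barycentric_map_injective:
  assumes "\<And>c. 0 \<le> w1 c" "\<And>c. 0 \<le> w2 c" "closed_chain (supp w1)" "closed_chain (supp w2)"
    and "barycentric_map w1 = barycentric_map w2"
  shows "w1 = w2"
  using assms
proof (induction "card (supp w1)" arbitrary: w1 w2 rule: less_induct)
  case less
  note nonneg = less.prems(1,2) and chain = less.prems(3,4) and eq = less.prems(5)
  show ?case
  proof (cases "supp w1 = {}")
    case True
    then have "supp (barycentric_map w2) = {}"
      using eq supp_barycentric_map_eq_empty[OF nonneg(1) chain(1)] by simp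
    then have "supp w2 = {}" using supp_barycentric_map_eq_empty[OF nonneg(2) chain(2)] by simp
    with True show ?thesis by (auto simp: supp_def)
  next
    case False
    then obtain c where c: "c \<in> supp w1" "c \<in> closed_codes" "w1 c = w2 c"
      using barycentric_map_eq_top_weight[OF nonneg chain eq] by blast
    have "w1(c := 0) = w2(c := 0)"
    proof (rule less.hyps)
      show "card (supp (w1(c := 0))) < card (supp w1)"
        using c(1) finite_closed_chain[OF chain(1)]
        by (intro psubset_card_mono) (auto simp: supp_def)
      show "barycentric_map (w1(c := 0)) = barycentric_map (w2(c := 0))"
      proof
        fix u
        show "barycentric_map (w1(c := 0)) u = barycentric_map (w2(c := 0)) u"
          using barycentric_map_split[OF c(2), of w1 u] barycentric_map_split[OF c(2), of w2 u]
            eq c(3)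
          by simp
      qed
      have "supp (w(c := 0)) \<subseteq> supp w" for w :: "nat \<Rightarrow> real" by (auto simp: supp_def)
      then show "closed_chain (supp (w1(c := 0)))" "closed_chain (supp (w2(c := 0)))"
        using chain closed_chain_subset by blast+
    qed (use nonneg in auto)
    then show ?thesis using c(3) by (metis fun_upd_triv fun_upd_upd)
  qed
qed

lemma barycentric_map_image: "barycentric_map ` realization_set order_complex = monotone_points"
proof
  show "barycentric_map ` realization_set order_complex \<subseteq> monotone_points"
    using barycentric_map_in_monotone_points by (rule image_subsetI)
  show "monotone_points \<subseteq> barycentric_map ` realization_set order_complex"
  proof
    fix a assume "a \<in> monotone_points"
    then obtain t where "t \<in> realization_set order_complex" "barycentric_map t = a"
      using barycentric_map_onto by blast
    then show "a \<in> barycentric_map ` realization_set order_complex" by blast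
  qed
qed

lemma inj_on_barycentric_map: "inj_on barycentric_map (realization_set order_complex)"
proof (rule inj_onI)
  fix x y assume "x \<in> realization_set order_complex" "y \<in> realization_set order_complex"
    and "barycentric_map x = barycentric_map y"
  then show "x = y"
    using barycentric_map_injective[of x y] by (simp add: order_complex_points_iff)
qed

lemma continuous_map_barycentric_map:
  "continuous_map (realization order_complex) (powertop_real UNIV) barycentric_map"
  unfolding continuous_map_componentwise_UNIV barycentric_map_def realization_def
  by (intro allI continuous_map_sum continuous_map_real_mult continuous_map_const[THEN iffD2]
      continuous_map_from_subtopology continuous_map_product_projection)
    (auto simp: finite_closed_codes)

theorem monotone_points_homeomorphic_order_complex:
  "subtopology nbhd_space monotone_points homeomorphic_space realization order_complex"
proof -
  have "nbhd_points \<inter> monotone_points = monotone_points" by (auto simp: monotone_points_def)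
  then have sub:
    "subtopology nbhd_space monotone_points = subtopology (powertop_real UNIV) monotone_points"
    by (simp add: realization_def subtopology_subtopology)
  have "homeomorphic_map (realization order_complex)
          (subtopology (powertop_real UNIV) monotone_points) barycentric_map"
  proof (rule continuous_imp_homeomorphic_map)
    show "continuous_map (realization order_complex)
            (subtopology (powertop_real UNIV) monotone_points) barycentric_map"
      using continuous_map_barycentric_map barycentric_map_in_monotone_points
      by (intro continuous_map_into_subtopology) (auto simp: realization_def)
    show "compact_space (realization order_complex)"
      by (rule compact_space_realization[OF simplicial_complex_order_complex])
    show "Hausdorff_space (subtopology (powertop_real UNIV) monotone_points)"
      by (intro Hausdorff_space_subtopology) (simp add: Hausdorff_space_product_topology)
    show "barycentric_map ` topspace (realization order_complex) =
            topspace (subtopology (powertop_real UNIV) monotone_points)"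
      using barycentric_map_image by (simp add: realization_def)
    show "inj_on barycentric_map (topspace (realization order_complex))"
      using inj_on_barycentric_map by (simp add: realization_def)
  qed
  then have "realization order_complex homeomorphic_space subtopology nbhd_space monotone_points"
    unfolding sub by (rule homeomorphic_map_imp_homeomorphic_space)
  then show ?thesis by (metis homeomorphic_space_sym)
qed

section \<open>Dimension of the order complex\<close>

lemma inj_on_common_nbhd_closed_faces: "inj_on common_nbhd closed_faces"
proof (rule inj_onI)
  fix X Y assume "X \<in> closed_faces" "Y \<in> closed_faces" "common_nbhd X = common_nbhd Y"
  then have "nbhd_closure X = nbhd_closure Y" "nbhd_closure X = X" "nbhd_closure Y = Y"
    by (simp_all add: nbhd_closure_def closed_faces_def)
  then show "X = Y" by simp
qed

lemma card_chain_above_le_common_nbhd: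
  assumes chain: "chain\<^sub>\<subseteq> C" and faces: "C \<subseteq> closed_faces" and "Y \<in> C"
  shows "card {Z \<in> C. Y \<subseteq> Z} \<le> card (common_nbhd Y)"
proof -
  let ?above = "{Z \<in> C. Y \<subseteq> Z}"
  have "card ?above = card (common_nbhd ` ?above)"
    using inj_on_subset[OF inj_on_common_nbhd_closed_faces, of ?above] faces
    by (intro card_image[symmetric]) auto
  also have "\<dots> \<le> card (common_nbhd Y)"
  proof (rule card_chain_le[OF finite_common_nbhd])
    show "chain\<^sub>\<subseteq> (common_nbhd ` ?above)"
      unfolding chain_subset_def
    proof (intro ballI)
      fix A B assume "A \<in> common_nbhd ` ?above" "B \<in> common_nbhd ` ?above"
      then obtain Z1 Z2 where "Z1 \<in> C" "Z2 \<in> C" "A = common_nbhd Z1" "B = common_nbhd Z2" by auto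
      then show "A \<subseteq> B \<or> B \<subseteq> A" using chain common_nbhd_antimono unfolding chain_subset_def by metis
    qed
    show "N \<noteq> {} \<and> N \<subseteq> common_nbhd Y" if N: "N \<in> common_nbhd ` ?above" for N
    proof -
      obtain Z where "Z \<in> closed_faces" "Y \<subseteq> Z" "N = common_nbhd Z" using N faces by auto
      then show ?thesis using closed_facesD[of Z] common_nbhd_antimono by blast
    qed
  qed
  finally show ?thesis .
qed

text \<open>The \<open>j\<close>-th smallest face \<open>Y\<close> of a chain of \<open>m \<ge> j + k - 1\<close> closed faces has at least \<open>j\<close>
  vertices, and the \<open>m + 1 - j\<close> faces above it give at least \<open>k\<close> vertices in \<open>common_nbhd Y\<close>.\<close>
lemma order_complex_card_le:
  assumes free: "\<not> contains_biclique n j k E" and j: "0 < j" and k: "0 < k"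
    and D: "D \<in> order_complex"
  shows "card D + 2 \<le> j + k"
proof (rule ccontr)
  assume "\<not> ?thesis"
  define C where "C = set_decode ` D"
  have chain: "chain\<^sub>\<subseteq> C" and faces: "C \<subseteq> closed_faces"
    using D by (auto simp: C_def order_complex_def closed_chain_def closed_codes_iff)
  have finC: "finite C" using D finite_closed_chain by (simp add: C_def order_complex_def)
  have "card C = card D" unfolding C_def by (intro card_image inj_onI) (simp add: set_decode_eq_iff)
  with \<open>\<not> ?thesis\<close> have big: "j + k \<le> card C + 1" by simp
  then have "j \<le> card C" using k by linarith
  then obtain Y where Y: "Y \<in> C" "card {Z \<in> C. Z \<subseteq> Y} = j"
    using chain_has_element_of_rank[OF finC chain, of j] j by auto
  have Y_face: "Y \<noteq> {} \<and> Y \<subseteq> {..<n} \<and> finite Y" using Y(1) faces closed_facesD by blast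
  have "j \<le> card Y"
  proof -
    have "card {Z \<in> C. Z \<subseteq> Y} \<le> card Y"
    proof (rule card_chain_le)
      show "chain\<^sub>\<subseteq> {Z \<in> C. Z \<subseteq> Y}" using chain by (auto simp: chain_subset_def)
      show "Z \<noteq> {} \<and> Z \<subseteq> Y" if "Z \<in> {Z \<in> C. Z \<subseteq> Y}" for Z
        using that faces closed_facesD by blast
    qed (use Y_face in blast)
    then show ?thesis using Y(2) by simp
  qed
  moreover have "k \<le> card (common_nbhd Y)"
    using chain_card_below_add_above[OF finC chain Y(1)] Y(2) big
      card_chain_above_le_common_nbhd[OF chain faces Y(1)] by linarith
  ultimately show False using contains_biclique_common_nbhd Y_face free by blast
qed

theorem strong_deformation_retract_onto_low_dimensional_complex:
  assumes "\<not> contains_biclique n j k E" "0 < j" "0 < k"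
  shows "\<exists>A L. simplicial_complex L \<and> (\<forall>\<sigma>\<in>L. int (card \<sigma>) - 1 \<le> int j + int k - 3) \<and>
           strong_deformation_retract nbhd_space A \<and>
           subtopology nbhd_space A homeomorphic_space realization L"
proof (intro exI conjI ballI)
  show "simplicial_complex order_complex" by (rule simplicial_complex_order_complex)
  show "int (card \<sigma>) - 1 \<le> int j + int k - 3" if "\<sigma> \<in> order_complex" for \<sigma>
    using order_complex_card_le[OF assms that] by linarith
  show "strong_deformation_retract nbhd_space monotone_points"
    by (rule strong_deformation_retract_monotone_points)
  show "subtopology nbhd_space monotone_points homeomorphic_space realization order_complex"
    by (rule monotone_points_homeomorphic_order_complex)
qed

end

section \<open>Random edge sets\<close>

definition random_subset_prob :: "'a set \<Rightarrow> real \<Rightarrow> ('a set \<Rightarrow> bool) \<Rightarrow> real" where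
  "random_subset_prob Q p P =
     (\<Sum>E\<in>Pow Q. if P E then p ^ card E * (1 - p) ^ (card Q - card E) else 0)"

lemma Gnp_prob_eq_random_subset_prob: "Gnp_prob n p P = random_subset_prob (pairs n) p P"
  by (simp add: Gnp_prob_def random_subset_prob_def)

lemma random_subset_prob_superset:
  assumes Q: "finite Q" and F: "F \<subseteq> Q"
  shows "random_subset_prob Q p (\<lambda>E. F \<subseteq> E) = p ^ card F"
proof -
  let ?q = "\<lambda>x. if x \<in> F then 0 else 1 - p"
  have "p ^ card F = (\<Prod>x\<in>F. if x \<in> F then p else 1)" by simp
  also have "\<dots> = (\<Prod>x\<in>Q. if x \<in> F then p else 1)"
    using Q F by (intro prod.mono_neutral_left) auto
  also have "\<dots> = (\<Prod>x\<in>Q. p + ?q x)" by (intro prod.cong) auto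
  also have "\<dots> = (\<Sum>E\<in>Pow Q. (\<Prod>x\<in>E. p) * (\<Prod>x\<in>Q - E. ?q x))"
    using Q by (rule prod_add)
  also have "\<dots> = random_subset_prob Q p (\<lambda>E. F \<subseteq> E)"
    unfolding random_subset_prob_def
  proof (rule sum.cong)
    fix E assume "E \<in> Pow Q"
    then have E: "E \<subseteq> Q" "finite E" using Q finite_subset by auto
    show "(\<Prod>x\<in>E. p) * (\<Prod>x\<in>Q - E. ?q x) =
          (if F \<subseteq> E then p ^ card E * (1 - p) ^ (card Q - card E) else 0)"
    proof (cases "F \<subseteq> E")
      case True
      then have "(\<Prod>x\<in>Q - E. ?q x) = (\<Prod>x\<in>Q - E. 1 - p)" by (intro prod.cong) auto
      with True E show ?thesis by (simp add: card_Diff_subset)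
    next
      case False
      then obtain x where "x \<in> Q - E" "x \<in> F" using F by blast
      then have "(\<Prod>x\<in>Q - E. ?q x) = 0" using Q by (intro prod_zero) auto
      with False show ?thesis by simp
    qed
  qed simp
  finally show ?thesis ..
qed

lemma random_subset_prob_add_compl:
  assumes "finite Q"
  shows "random_subset_prob Q p P + random_subset_prob Q p (\<lambda>E. \<not> P E) = 1"
proof -
  have "random_subset_prob Q p P + random_subset_prob Q p (\<lambda>E. \<not> P E) =
        random_subset_prob Q p (\<lambda>E. {} \<subseteq> E)"
    unfolding random_subset_prob_def sum.distrib[symmetric] by (intro sum.cong) auto
  then show ?thesis using random_subset_prob_superset[OF assms, of "{}" p] by simp
qed

lemma random_subset_prob_mono:
  assumes "0 \<le> p" "p \<le> 1" "\<And>E. E \<subseteq> Q \<Longrightarrow> P E \<Longrightarrow> P' E"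
  shows "random_subset_prob Q p P \<le> random_subset_prob Q p P'"
  unfolding random_subset_prob_def using assms by (intro sum_mono) auto

lemma random_subset_prob_union_le:
  fixes Q :: "'a set"
  assumes "0 \<le> p" "p \<le> 1" "finite B"
  shows "random_subset_prob Q p (\<lambda>E. \<exists>b\<in>B. R b E) \<le> (\<Sum>b\<in>B. random_subset_prob Q p (R b))"
proof -
  have "random_subset_prob Q p (\<lambda>E. \<exists>b\<in>B. R b E) \<le>
        (\<Sum>E\<in>Pow Q. \<Sum>b\<in>B. if R b E then p ^ card E * (1 - p) ^ (card Q - card E) else 0)"
    unfolding random_subset_prob_def
  proof (rule sum_mono)
    fix E :: "'a set"
    let ?w = "p ^ card E * (1 - p) ^ (card Q - card E)"
    have w: "0 \<le> ?w" using assms by simp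
    show "(if \<exists>b\<in>B. R b E then ?w else 0) \<le> (\<Sum>b\<in>B. if R b E then ?w else 0)"
    proof (cases "\<exists>b\<in>B. R b E")
      case True
      then obtain b where "b \<in> B" "R b E" by blast
      then have "?w \<le> (\<Sum>b\<in>B. if R b E then ?w else 0)"
        using member_le_sum[of b B "\<lambda>b. if R b E then ?w else 0"] w assms(3) by simp
      with True show ?thesis by simp
    qed (use w in \<open>auto intro: sum_nonneg\<close>)
  qed
  also have "\<dots> = (\<Sum>b\<in>B. random_subset_prob Q p (R b))"
    unfolding random_subset_prob_def by (rule sum.swap)
  finally show ?thesis .
qed

lemma finite_pairs: "finite (pairs n)"
  by (rule finite_subset[of _ "Pow {..<n}"]) (auto simp: pairs_def)

lemma Gnp_prob_le_1:
  assumes "0 \<le> p" "p \<le> 1"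
  shows "Gnp_prob n p P \<le> 1"
  using random_subset_prob_add_compl[of "pairs n" p P, OF finite_pairs]
    random_subset_prob_mono[of p "pairs n" "\<lambda>_. False" "\<lambda>E. \<not> P E", OF assms]
  by (simp add: Gnp_prob_eq_random_subset_prob random_subset_prob_def)

definition biclique_edges :: "nat set \<Rightarrow> nat set \<Rightarrow> nat set set" where
  "biclique_edges S T = (\<lambda>(s, t). {s, t}) ` (S \<times> T)"

lemma card_biclique_edges:
  assumes "S \<inter> T = {}"
  shows "card (biclique_edges S T) = card S * card T"
proof -
  have "inj_on (\<lambda>(s, t). {s, t}) (S \<times> T)"
    using assms by (auto intro!: inj_onI simp: doubleton_eq_iff)
  then show ?thesis by (simp add: biclique_edges_def card_image card_cartesian_product)
qed

lemma biclique_edges_subset_pairs: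
  assumes "S \<subseteq> {..<n}" "T \<subseteq> {..<n}" "S \<inter> T = {}"
  shows "biclique_edges S T \<subseteq> pairs n"
proof
  fix e assume "e \<in> biclique_edges S T"
  then obtain s t where "s \<in> S" "t \<in> T" "e = {s, t}" by (auto simp: biclique_edges_def)
  moreover have "s < n" "t < n" "s \<noteq> t" using assms calculation by auto
  ultimately show "e \<in> pairs n" unfolding pairs_def by blast
qed

definition biclique_sides :: "nat \<Rightarrow> nat \<Rightarrow> nat \<Rightarrow> (nat set \<times> nat set) set" where
  "biclique_sides n j k =
     {(S, T). S \<subseteq> {..<n} \<and> T \<subseteq> {..<n} \<and> card S = j \<and> card T = k \<and> S \<inter> T = {}}"

lemma finite_biclique_sides: "finite (biclique_sides n j k)"
  by (rule finite_subset[of _ "Pow {..<n} \<times> Pow {..<n}"]) (auto simp: biclique_sides_def)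

lemma card_biclique_sides_le: "card (biclique_sides n j k) \<le> (n choose j) * (n choose k)"
proof -
  have "biclique_sides n j k \<subseteq> {S. S \<subseteq> {..<n} \<and> card S = j} \<times> {T. T \<subseteq> {..<n} \<and> card T = k}"
    by (auto simp: biclique_sides_def)
  then have "card (biclique_sides n j k) \<le>
      card ({S. S \<subseteq> {..<n} \<and> card S = j} \<times> {T. T \<subseteq> {..<n} \<and> card T = k})"
    by (intro card_mono finite_cartesian_product) auto
  then show ?thesis by (simp add: card_cartesian_product n_subsets)
qed

lemma contains_biclique_edges:
  assumes "contains_biclique n j k E"
  shows "\<exists>b\<in>biclique_sides n j k. biclique_edges (fst b) (snd b) \<subseteq> E"
proof -
  from assms obtain S T where ST: "S \<subseteq> {..<n} \<and> T \<subseteq> {..<n} \<and> card S = j \<and> card T = k \<and>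
      S \<inter> T = {} \<and> (\<forall>s\<in>S. \<forall>t\<in>T. {s, t} \<in> E)"
    unfolding contains_biclique_def by blast
  then have "(S, T) \<in> biclique_sides n j k" "biclique_edges S T \<subseteq> E"
    by (auto simp: biclique_sides_def biclique_edges_def)
  then show ?thesis by (intro bexI[of _ "(S, T)"]) simp_all
qed

lemma random_subset_prob_biclique_edges:
  assumes "b \<in> biclique_sides n j k"
  shows "random_subset_prob (pairs n) p (\<lambda>E. biclique_edges (fst b) (snd b) \<subseteq> E) = p ^ (j * k)"
proof -
  obtain S T where "b = (S, T)" "S \<subseteq> {..<n}" "T \<subseteq> {..<n}" "card S = j" "card T = k" "S \<inter> T = {}"
    using assms by (auto simp: biclique_sides_def)
  then show ?thesis
    using random_subset_prob_superset[OF finite_pairs biclique_edges_subset_pairs, of S n T p]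
      card_biclique_edges[of S T] by simp
qed

lemma Gnp_prob_no_biclique_ge:
  assumes p: "0 \<le> p" "p \<le> 1"
  shows "1 - real (n choose j) * real (n choose k) * p ^ (j * k)
           \<le> Gnp_prob n p (\<lambda>E. \<not> contains_biclique n j k E)"
proof -
  let ?B = "biclique_sides n j k"
  have "Gnp_prob n p (contains_biclique n j k) \<le>
      random_subset_prob (pairs n) p (\<lambda>E. \<exists>b\<in>?B. biclique_edges (fst b) (snd b) \<subseteq> E)"
    unfolding Gnp_prob_eq_random_subset_prob
      by (rule random_subset_prob_mono[OF p contains_biclique_edges])
  also have "\<dots> \<le> (\<Sum>b\<in>?B. random_subset_prob (pairs n) p (\<lambda>E. biclique_edges (fst b) (snd b) \<subseteq> E))"
    by (rule random_subset_prob_union_le[OF p finite_biclique_sides])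
  also have "\<dots> = real (card ?B) * p ^ (j * k)" by (simp add: random_subset_prob_biclique_edges)
  also have "\<dots> \<le> real ((n choose j) * (n choose k)) * p ^ (j * k)"
    using card_biclique_sides_le p by (intro mult_right_mono) (simp only: of_nat_le_iff, simp)
  finally have "Gnp_prob n p (contains_biclique n j k) \<le>
      real (n choose j) * real (n choose k) * p ^ (j * k)"
    by simp
  moreover have
    "Gnp_prob n p (contains_biclique n j k) + Gnp_prob n p (\<lambda>E. \<not> contains_biclique n j k E) = 1"
    using random_subset_prob_add_compl[of "pairs n" p "contains_biclique n j k", OF finite_pairs]
    by (simp only: Gnp_prob_eq_random_subset_prob)
  ultimately show ?thesis by linarith
qed

theorem theorem2p2:
  fixes p :: "nat \<Rightarrow> real" and j k :: "nat \<Rightarrow> nat"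
  assumes "\<And>n. 0 \<le> p n \<and> p n \<le> 1"
    and "\<And>n. 0 < j n" and "\<And>n. 0 < k n"
    and "(\<lambda>n. real (n choose j n) * real (n choose k n) * p n ^ (j n * k n)) \<longlonglongrightarrow> 0"
  shows "almost_always p (\<lambda>n E. \<exists>A L. simplicial_complex L \<and>
            (\<forall>\<sigma>\<in>L. int (card \<sigma>) - 1 \<le> int (j n) + int (k n) - 3) \<and>
            strong_deformation_retract (realization (nbhd_complex n E)) A \<and>
            subtopology (realization (nbhd_complex n E)) A homeomorphic_space realization L)"
proof -
  let ?P = "\<lambda>n E. \<exists>A L. simplicial_complex L \<and>
            (\<forall>\<sigma>\<in>L. int (card \<sigma>) - 1 \<le> int (j n) + int (k n) - 3) \<and>
            strong_deformation_retract (realization (nbhd_complex n E)) A \<and>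
            subtopology (realization (nbhd_complex n E)) A homeomorphic_space realization L"
  let ?C = "\<lambda>n. real (n choose j n) * real (n choose k n) * p n ^ (j n * k n)"
  have p: "0 \<le> p n" "p n \<le> 1" for n using assms(1) by auto
  have mono: "Gnp_prob n (p n) (\<lambda>E. \<not> contains_biclique n (j n) (k n) E) \<le> Gnp_prob n (p n) (?P n)"
    for n
    unfolding Gnp_prob_eq_random_subset_prob using p assms(2,3)
    by (intro random_subset_prob_mono
        simple_graph.strong_deformation_retract_onto_low_dimensional_complex)
      (auto simp: simple_graph_def)
  have lower: "1 - ?C n \<le> Gnp_prob n (p n) (?P n)" for n
    using order_trans[OF Gnp_prob_no_biclique_ge[OF p] mono] .
  have upper: "Gnp_prob n (p n) (?P n) \<le> 1" for n by (rule Gnp_prob_le_1[OF p])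
  have lim: "(\<lambda>n. 1 - ?C n) \<longlonglongrightarrow> 1" using tendsto_diff[OF tendsto_const assms(4), of 1] by simp
  show ?thesis
    unfolding almost_always_def
    by (rule tendsto_sandwich[OF always_eventually always_eventually lim tendsto_const])
      (use lower upper in blast)+
qed

end
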